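(* For $p_q\in(0,1)$, $p_a\in[0,1]$ let $$\mathbf{R}(p_q,p_a)=\Big\{(\lambda_p,\lambda_s)\in[0,1]^2:\ \lambda_s< p_q f_{sd}\Big[1-\frac{\lambda_p}{f_{pd}+p_a f_{ps}(1-f_{pd})}\Big],\ \lambda_p<\frac{f_{sd}(1-p_q)[f_{pd}+p_a f_{ps}(1-f_{pd})]}{f_{sd}(1-p_q)+p_a f_{ps}(1-f_{pd})}\Big\}.$$ Then $$\bigcup_{p_q\in(0,1),\,p_a\in[0,1]}\mathbf{R}(p_q,p_a)=\Big\{(\lambda_p,\lambda_s)\in[0,1]^2:\ \lambda_s<f_{sd}-\frac{f_{sd}+f_{ps}(1-f_{pd})}{f_{pd}+f_{ps}(1-f_{pd})}\,\lambda_p\Big\}.$$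
   Context: Constants $f_{pd},f_{ps},f_{sd}\in(0,1)$ with $f_{pd}<f_{sd}$ are link success probabilities (PU→destination, PU→SU, SU→destination). $\mathbf{R}(p_q,p_a)$ is the stable throughput region of the cognitive cooperative system under the randomized service policy with queue-selection probability $p_q$ and relay admission probability $p_a$. *)

theory Defs
  imports Complex_Main
begin

definition stab_region :: "real \<Rightarrow> real \<Rightarrow> real \<Rightarrow> real \<Rightarrow> real \<Rightarrow> (real \<times> real) set" where
  "stab_region fpd fps fsd pq pa =
     {(lp, ls). lp \<in> {0..1} \<and> ls \<in> {0..1} \<and>
        ls < pq * fsd * (1 - lp / (fpd + pa * fps * (1 - fpd))) \<and>
        lp < fsd * (1 - pq) * (fpd + pa * fps * (1 - fpd)) /
               (fsd * (1 - pq) + pa * fps * (1 - fpd))}"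

end

theory Submission
  imports Defs
begin

text \<open>Write \<open>r = pa fps (1 - fpd)\<close> for the relay gain and \<open>E = fsd (fpd + r - lp)\<close>.
  Clearing denominators, the two constraints of \<open>R(pq, pa)\<close> read
  \<open>ls (fpd + r) < pq E\<close> and \<open>lp r < (1 - pq) E\<close>, so a suitable \<open>pq\<close> exists exactly when
  \<open>ls (fpd + r) + lp r < E\<close>, i.e. \<open>ls < fsd - (fsd + r) / (fpd + r) lp\<close>.
  Since \<open>fpd < fsd\<close>, the slope \<open>(fsd + r) / (fpd + r)\<close> decreases in \<open>r\<close>, so the largest
  region is obtained for full relay admission \<open>pa = 1\<close>.\<close>

lemma ex_convex_split_iff:
  fixes x y E :: real
  assumes "0 \<le> x" "0 \<le> y"
  shows "(\<exists>t\<in>{0<..<1}. x < t * E \<and> y < (1 - t) * E) \<longleftrightarrow> x + y < E"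
proof
  assume "\<exists>t\<in>{0<..<1}. x < t * E \<and> y < (1 - t) * E"
  then obtain t where "x < t * E" "y < (1 - t) * E" by blast
  then show "x + y < E" by (simp add: algebra_simps)
next
  assume sum: "x + y < E"
  then have E: "0 < E" using assms by linarith
  define t where "t = (x + (E - y)) / (2 * E)"
  have "E * (x + y) < E * E" using sum E by simp
  then have "x < t * E" "y < (1 - t) * E" "0 < t" "t < 1"
    using sum E assms by (auto simp: t_def field_simps)
  then show "\<exists>t\<in>{0<..<1}. x < t * E \<and> y < (1 - t) * E" by auto
qed

lemma stab_constraints_cleared:
  fixes fsd d r pq lp ls :: real
  assumes "0 < fsd" "0 < d" "0 \<le> r" "pq < 1"
  shows "(ls < pq * fsd * (1 - lp / (d + r)) \<and>
          lp < fsd * (1 - pq) * (d + r) / (fsd * (1 - pq) + r)) \<longleftrightarrow>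
         (ls * (d + r) < pq * (fsd * (d + r - lp)) \<and>
          lp * r < (1 - pq) * (fsd * (d + r - lp)))"
proof -
  have A: "0 < d + r" using assms by linarith
  have D: "0 < fsd * (1 - pq) + r" using assms by (simp add: add_pos_nonneg)
  have "ls < pq * fsd * (1 - lp / (d + r)) \<longleftrightarrow> ls * (d + r) < pq * (fsd * (d + r - lp))"
    using A by (simp add: field_simps)
  moreover have "lp < fsd * (1 - pq) * (d + r) / (fsd * (1 - pq) + r) \<longleftrightarrow>
                 lp * r < (1 - pq) * (fsd * (d + r - lp))"
    using D by (simp add: pos_less_divide_eq algebra_simps)
  ultimately show ?thesis by simp
qed

lemma ex_stab_pq_iff:
  fixes fsd d r lp ls :: real
  assumes "0 < fsd" "0 < d" "0 \<le> r" "0 \<le> lp" "0 \<le> ls"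
  shows "(\<exists>pq\<in>{0<..<1}. ls < pq * fsd * (1 - lp / (d + r)) \<and>
            lp < fsd * (1 - pq) * (d + r) / (fsd * (1 - pq) + r)) \<longleftrightarrow>
         ls < fsd - (fsd + r) / (d + r) * lp"
proof -
  have A: "0 < d + r" using assms by linarith
  have "(\<exists>pq\<in>{0<..<1}. ls < pq * fsd * (1 - lp / (d + r)) \<and>
            lp < fsd * (1 - pq) * (d + r) / (fsd * (1 - pq) + r)) \<longleftrightarrow>
        (\<exists>pq\<in>{0<..<1}. ls * (d + r) < pq * (fsd * (d + r - lp)) \<and>
            lp * r < (1 - pq) * (fsd * (d + r - lp)))"
    using stab_constraints_cleared[OF assms(1-3)] by auto
  also have "\<dots> \<longleftrightarrow> ls * (d + r) + lp * r < fsd * (d + r - lp)"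
    using assms by (intro ex_convex_split_iff) auto
  also have "\<dots> \<longleftrightarrow> ls < fsd - (fsd + r) / (d + r) * lp"
    using A by (simp add: field_simps)
  finally show ?thesis .
qed

lemma stab_slope_antimono:
  fixes fsd d r r' :: real
  assumes "0 < d" "d \<le> fsd" "0 \<le> r" "r \<le> r'"
  shows "(fsd + r') / (d + r') \<le> (fsd + r) / (d + r)"
proof -
  have "(fsd + r) * (d + r') - (fsd + r') * (d + r) = (fsd - d) * (r' - r)"
    by (simp add: algebra_simps)
  also have "\<dots> \<ge> 0" using assms by simp
  finally show ?thesis using assms by (simp add: divide_simps mult.commute)
qed

lemma ex_relay_admission_iff:
  fixes fsd d g lp ls :: real
  assumes "0 < d" "d \<le> fsd" "0 \<le> g" "0 \<le> lp"
  shows "(\<exists>pa\<in>{0..1}. ls < fsd - (fsd + pa * g) / (d + pa * g) * lp) \<longleftrightarrow>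
         ls < fsd - (fsd + g) / (d + g) * lp"
proof
  assume "\<exists>pa\<in>{0..1}. ls < fsd - (fsd + pa * g) / (d + pa * g) * lp"
  then obtain pa where pa: "pa \<in> {0..1}" and ls: "ls < fsd - (fsd + pa * g) / (d + pa * g) * lp"
    by blast
  have "(fsd + g) / (d + g) \<le> (fsd + pa * g) / (d + pa * g)"
    using pa assms by (intro stab_slope_antimono) (auto simp: mult_left_le_one_le)
  then show "ls < fsd - (fsd + g) / (d + g) * lp"
    using ls assms(4) by (smt (verit) mult_right_mono)
next
  assume "ls < fsd - (fsd + g) / (d + g) * lp"
  then show "\<exists>pa\<in>{0..1}. ls < fsd - (fsd + pa * g) / (d + pa * g) * lp"
    by (intro bexI[of _ 1]) auto
qed

theorem theorem2:
  fixes fpd fps fsd :: real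
  assumes "0 < fpd" "fpd < 1" "0 < fps" "fps < 1" "0 < fsd" "fsd < 1" "fpd < fsd"
  shows "(\<Union>pq\<in>{0<..<1}. \<Union>pa\<in>{0..1}. stab_region fpd fps fsd pq pa) =
         {(lp, ls). lp \<in> {0..1} \<and> ls \<in> {0..1} \<and>
            ls < fsd - (fsd + fps * (1 - fpd)) / (fpd + fps * (1 - fpd)) * lp}"
proof -
  define g where "g = fps * (1 - fpd)"
  have g: "0 \<le> g" using assms by (simp add: g_def)
  have region: "(\<Union>pq\<in>{0<..<1}. stab_region fpd fps fsd pq pa) =
      {(lp, ls). lp \<in> {0..1} \<and> ls \<in> {0..1} \<and> ls < fsd - (fsd + pa * g) / (fpd + pa * g) * lp}"
    if "pa \<in> {0..1}" for pa
    using ex_stab_pq_iff[of fsd fpd "pa * g"] that g assms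
    by (auto simp: stab_region_def g_def mult.assoc)
  have "(\<Union>pq\<in>{0<..<1}. \<Union>pa\<in>{0..1}. stab_region fpd fps fsd pq pa) =
        (\<Union>pa\<in>{0..1}. \<Union>pq\<in>{0<..<1}. stab_region fpd fps fsd pq pa)"
    by (rule SUP_commute)
  also have "\<dots> = {(lp, ls). lp \<in> {0..1} \<and> ls \<in> {0..1} \<and>
                  (\<exists>pa\<in>{0..1}. ls < fsd - (fsd + pa * g) / (fpd + pa * g) * lp)}"
    using region by auto
  also have "\<dots> = {(lp, ls). lp \<in> {0..1} \<and> ls \<in> {0..1} \<and>
                  ls < fsd - (fsd + g) / (fpd + g) * lp}"
    using ex_relay_admission_iff[of fpd fsd g] g assms by auto
  finally show ?thesis by (simp add: g_def)
qed

end
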